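(* Let $G$ be a locally compact group, $p\in(1,\infty)$ and $(\pi,E)\in\mathrm{Rep}_p(G)$. Then $A_{p,\pi}=A_{p,\pi^\infty}$ (as normed spaces of functions on $G$).
   Context: A representation $(\pi,E)$ of $G$ is a strongly continuous homomorphism from $G$ into the invertible isometries of a Banach space $E$. A $QSL_p$-space is a Banach space isometric to a quotient of a closed subspace of an $L_p$-space; $\mathrm{Rep}_p(G)$ is the class of representations on $QSL_p$-spaces. $L_p(E)$ is the space of sequences $(\xi_n)_n$ in $E$ with $(\sum_n\|\xi_n\|^p)^{1/p}<\infty$ (its dual is $L_{p'}(E^* )$, $1/p+1/p'=1$), and $\pi^\infty(x)(\xi_n)_n=(\pi(x)\xi_n)_n$. For a representation $(\rho,F)$, $A_{p,\rho}$ is the space of functions $u(x)=\sum_n\langle\rho(x)\xi_n,\eta_n\rangle$ with $\xi_n\in F$, $\eta_n\in F^*$, $\sum_n\|\xi_n\|\|\eta_n\|<\infty$, with norm the infimum of $\sum_n\|\xi_n\|\|\eta_n\|$ over all such expressions. *)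

theory Defs
  imports "HOL-Analysis.Analysis" "HOL-Algebra.Group"
begin

definition lc_group :: "('g, 'b) monoid_scheme \<Rightarrow> 'g topology \<Rightarrow> bool" where
  "lc_group G T \<longleftrightarrow> group G \<and> topspace T = carrier G \<and> Hausdorff_space T
     \<and> locally_compact_space T
     \<and> continuous_map (prod_topology T T) T (\<lambda>(x, y). x \<otimes>\<^bsub>G\<^esub> y)
     \<and> continuous_map T T (\<lambda>x. inv\<^bsub>G\<^esub> x)"

section \<open>Complex Banach spaces: a real Banach space type with a compatible complex scalar multiplication\<close>

definition complex_banach :: "(complex \<Rightarrow> 'e::banach \<Rightarrow> 'e) \<Rightarrow> bool" where
  "complex_banach smul \<longleftrightarrow> Vector_Spaces.vector_space smul
     \<and> (\<forall>r v. smul (complex_of_real r) v = scaleR r v)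
     \<and> (\<forall>c v. norm (smul c v) = cmod c * norm v)"

definition Lp_funs :: "'m measure \<Rightarrow> real \<Rightarrow> ('m \<Rightarrow> complex) set" where
  "Lp_funs M p = {f. f \<in> borel_measurable M \<and> integrable M (\<lambda>x. cmod (f x) powr p)}"

definition Lp_norm :: "'m measure \<Rightarrow> real \<Rightarrow> ('m \<Rightarrow> complex) \<Rightarrow> real" where
  "Lp_norm M p f = (\<integral>x. cmod (f x) powr p \<partial>M) powr (1 / p)"

definition Lp_closed_subspace :: "'m measure \<Rightarrow> real \<Rightarrow> ('m \<Rightarrow> complex) set \<Rightarrow> bool" where
  "Lp_closed_subspace M p S \<longleftrightarrow> S \<subseteq> Lp_funs M p \<and> (\<lambda>x. 0) \<in> S
     \<and> (\<forall>f\<in>S. \<forall>g\<in>S. (\<lambda>x. f x + g x) \<in> S)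
     \<and> (\<forall>c. \<forall>f\<in>S. (\<lambda>x. c * f x) \<in> S)
     \<and> (\<forall>f\<in>Lp_funs M p. (\<forall>e>0. \<exists>g\<in>S. Lp_norm M p (\<lambda>x. f x - g x) < e) \<longrightarrow> f \<in> S)"

(* E is isometrically isomorphic to S/T, S, T closed subspaces of L_p(M), T \<subseteq> S:
   Q : S \<rightarrow> E complex linear, onto, with \<parallel>Q f\<parallel> = dist_p(f, T) (the quotient norm). *)
definition QSLp_via :: "'m measure \<Rightarrow> real \<Rightarrow> (complex \<Rightarrow> 'e::banach \<Rightarrow> 'e) \<Rightarrow> bool" where
  "QSLp_via M p smul \<longleftrightarrow> (\<exists>S T (Q :: ('m \<Rightarrow> complex) \<Rightarrow> 'e).
     Lp_closed_subspace M p S \<and> Lp_closed_subspace M p T \<and> T \<subseteq> S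
     \<and> (\<forall>f\<in>S. \<forall>g\<in>S. Q (\<lambda>x. f x + g x) = Q f + Q g)
     \<and> (\<forall>c. \<forall>f\<in>S. Q (\<lambda>x. c * f x) = smul c (Q f))
     \<and> Q ` S = UNIV
     \<and> (\<forall>f\<in>S. norm (Q f) = Inf {Lp_norm M p (\<lambda>x. f x - g x) | g. g \<in> T}))"

(* E is a QSL_p-space: quotient of a subspace of L_p(M) for some measure space M
   (the measure space's underlying type is given by the first argument) *)
definition QSLp_space :: "'m itself \<Rightarrow> real \<Rightarrow> (complex \<Rightarrow> 'e::banach \<Rightarrow> 'e) \<Rightarrow> bool" where
  "QSLp_space _ p smul \<longleftrightarrow> complex_banach smul \<and> (\<exists>M :: 'm measure. QSLp_via M p smul)"

definition isometric_rep ::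
  "('g, 'b) monoid_scheme \<Rightarrow> 'g topology \<Rightarrow> (complex \<Rightarrow> 'e::banach \<Rightarrow> 'e) \<Rightarrow> ('g \<Rightarrow> 'e \<Rightarrow> 'e) \<Rightarrow> bool" where
  "isometric_rep G T smul \<pi> \<longleftrightarrow>
     (\<forall>x\<in>carrier G. bij (\<pi> x)
        \<and> (\<forall>v w. \<pi> x (v + w) = \<pi> x v + \<pi> x w)
        \<and> (\<forall>c v. \<pi> x (smul c v) = smul c (\<pi> x v))
        \<and> (\<forall>v. norm (\<pi> x v) = norm v))
   \<and> (\<forall>x\<in>carrier G. \<forall>y\<in>carrier G. \<pi> (x \<otimes>\<^bsub>G\<^esub> y) = \<pi> x \<circ> \<pi> y)
   \<and> \<pi> \<one>\<^bsub>G\<^esub> = id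
   \<and> (\<forall>v. continuous_map T euclidean (\<lambda>x. \<pi> x v))"

definition cdual :: "'v set \<Rightarrow> ('v \<Rightarrow> real) \<Rightarrow> ('v \<Rightarrow> 'v \<Rightarrow> 'v) \<Rightarrow> (complex \<Rightarrow> 'v \<Rightarrow> 'v)
    \<Rightarrow> ('v \<Rightarrow> complex) set" where
  "cdual V N add smul = {\<eta>. (\<forall>u\<in>V. \<forall>w\<in>V. \<eta> (add u w) = \<eta> u + \<eta> w)
      \<and> (\<forall>c. \<forall>u\<in>V. \<eta> (smul c u) = c * \<eta> u)
      \<and> (\<exists>C. \<forall>u\<in>V. cmod (\<eta> u) \<le> C * N u)}"

definition dual_norm :: "'v set \<Rightarrow> ('v \<Rightarrow> real) \<Rightarrow> ('v \<Rightarrow> complex) \<Rightarrow> real" where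
  "dual_norm V N \<eta> = Sup {cmod (\<eta> u) | u. u \<in> V \<and> N u \<le> 1}"

definition coef_repr ::
  "('g, 'b) monoid_scheme \<Rightarrow> ('g \<Rightarrow> 'v \<Rightarrow> 'v) \<Rightarrow> 'v set \<Rightarrow> ('v \<Rightarrow> real)
    \<Rightarrow> ('v \<Rightarrow> 'v \<Rightarrow> 'v) \<Rightarrow> (complex \<Rightarrow> 'v \<Rightarrow> 'v) \<Rightarrow> ('g \<Rightarrow> complex)
    \<Rightarrow> (nat \<Rightarrow> 'v) \<Rightarrow> (nat \<Rightarrow> 'v \<Rightarrow> complex) \<Rightarrow> bool" where
  "coef_repr G \<rho> V N add smul u \<xi> \<eta> \<longleftrightarrow>
     (\<forall>n. \<xi> n \<in> V \<and> \<eta> n \<in> cdual V N add smul)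
     \<and> summable (\<lambda>n. N (\<xi> n) * dual_norm V N (\<eta> n))
     \<and> u = restrict (\<lambda>x. \<Sum>n. \<eta> n (\<rho> x (\<xi> n))) (carrier G)"

definition coef_space ::
  "('g, 'b) monoid_scheme \<Rightarrow> ('g \<Rightarrow> 'v \<Rightarrow> 'v) \<Rightarrow> 'v set \<Rightarrow> ('v \<Rightarrow> real)
    \<Rightarrow> ('v \<Rightarrow> 'v \<Rightarrow> 'v) \<Rightarrow> (complex \<Rightarrow> 'v \<Rightarrow> 'v) \<Rightarrow> ('g \<Rightarrow> complex) set" where
  "coef_space G \<rho> V N add smul = {u. \<exists>\<xi> \<eta>. coef_repr G \<rho> V N add smul u \<xi> \<eta>}"

definition coef_norm ::
  "('g, 'b) monoid_scheme \<Rightarrow> ('g \<Rightarrow> 'v \<Rightarrow> 'v) \<Rightarrow> 'v set \<Rightarrow> ('v \<Rightarrow> real)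
    \<Rightarrow> ('v \<Rightarrow> 'v \<Rightarrow> 'v) \<Rightarrow> (complex \<Rightarrow> 'v \<Rightarrow> 'v) \<Rightarrow> ('g \<Rightarrow> complex) \<Rightarrow> real" where
  "coef_norm G \<rho> V N add smul u =
     Inf {(\<Sum>n. N (\<xi> n) * dual_norm V N (\<eta> n)) | \<xi> \<eta>. coef_repr G \<rho> V N add smul u \<xi> \<eta>}"

section \<open>The space L_p(E) of p-summable sequences and the amplification \<pi>^\<infinity>\<close>

definition lp_seq :: "real \<Rightarrow> (nat \<Rightarrow> 'e::real_normed_vector) set" where
  "lp_seq p = {\<xi>. summable (\<lambda>n. norm (\<xi> n) powr p)}"

definition lp_seq_norm :: "real \<Rightarrow> (nat \<Rightarrow> 'e::real_normed_vector) \<Rightarrow> real" where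
  "lp_seq_norm p \<xi> = (\<Sum>n. norm (\<xi> n) powr p) powr (1 / p)"

definition seq_add :: "(nat \<Rightarrow> 'e::plus) \<Rightarrow> (nat \<Rightarrow> 'e) \<Rightarrow> nat \<Rightarrow> 'e" where
  "seq_add \<xi> \<zeta> = (\<lambda>n. \<xi> n + \<zeta> n)"

definition seq_smul :: "(complex \<Rightarrow> 'e \<Rightarrow> 'e) \<Rightarrow> complex \<Rightarrow> (nat \<Rightarrow> 'e) \<Rightarrow> nat \<Rightarrow> 'e" where
  "seq_smul smul c \<xi> = (\<lambda>n. smul c (\<xi> n))"

definition amplify :: "('g \<Rightarrow> 'e \<Rightarrow> 'e) \<Rightarrow> 'g \<Rightarrow> (nat \<Rightarrow> 'e) \<Rightarrow> nat \<Rightarrow> 'e" where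
  "amplify \<pi> x \<xi> = (\<lambda>n. \<pi> x (\<xi> n))"

end

theory Submission
  imports Defs
begin

text \<open>
  A representation \<open>(\<xi>\<^sub>n, \<eta>\<^sub>n)\<close> of a coefficient of \<open>\<pi>\<close> becomes one of \<open>\<pi>\<^sup>\<infinity>\<close> of the same
  cost by putting \<open>\<xi>\<^sub>n\<close> into coordinate 0 and letting \<open>\<eta>\<^sub>n\<close> act on coordinate 0.
  Conversely, a bounded functional \<open>H\<close> on \<open>L\<^sub>p(E)\<close> is the sum of its coordinate functionals
  \<open>H \<circ> e\<^sub>k\<close>, and \<open>\<Sum>\<^sub>k \<parallel>\<zeta>\<^sub>k\<parallel> \<parallel>H \<circ> e\<^sub>k\<parallel> \<le> \<parallel>H\<parallel> \<parallel>\<zeta>\<parallel>\<^sub>p\<close>: test \<open>H\<close> on the sequence whose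
  \<open>k\<close>-th entry is \<open>\<parallel>\<zeta>\<^sub>k\<parallel>\<close> times a phase-corrected almost norming unit vector of \<open>H \<circ> e\<^sub>k\<close>.
  Hence a representation \<open>(\<Xi>\<^sub>n, H\<^sub>n)\<close> for \<open>\<pi>\<^sup>\<infinity>\<close> splits into the doubly indexed
  representation \<open>(\<Xi>\<^sub>n(k), H\<^sub>n \<circ> e\<^sub>k)\<close> for \<open>\<pi>\<close> of no larger cost.
\<close>

definition seq_single :: "nat \<Rightarrow> 'e::zero \<Rightarrow> nat \<Rightarrow> 'e" where
  "seq_single k v = (\<lambda>j. if j = k then v else 0)"

definition seq_trunc :: "nat \<Rightarrow> (nat \<Rightarrow> 'e::zero) \<Rightarrow> nat \<Rightarrow> 'e" where
  "seq_trunc K z = (\<lambda>j. if j < K then z j else 0)"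

definition seq_tail :: "nat \<Rightarrow> (nat \<Rightarrow> 'e::zero) \<Rightarrow> nat \<Rightarrow> 'e" where
  "seq_tail K z = (\<lambda>j. if j < K then 0 else z j)"

definition coef_cost :: "'v set \<Rightarrow> ('v \<Rightarrow> real) \<Rightarrow> (nat \<Rightarrow> 'v) \<Rightarrow> (nat \<Rightarrow> 'v \<Rightarrow> complex) \<Rightarrow> real"
  where "coef_cost V N \<xi> \<eta> = (\<Sum>n. N (\<xi> n) * dual_norm V N (\<eta> n))"

lemma coef_norm_altdef:
  "coef_norm G \<rho> V N add sm u = Inf {coef_cost V N \<xi> \<eta> | \<xi> \<eta>. coef_repr G \<rho> V N add sm u \<xi> \<eta>}"
  by (simp add: coef_norm_def coef_cost_def)

lemma complex_banach_norm_smul: "complex_banach smul \<Longrightarrow> norm (smul c v) = cmod c * norm v"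
  by (simp add: complex_banach_def)

lemma complex_banach_smul_zero: "complex_banach smul \<Longrightarrow> smul c 0 = 0"
  using complex_banach_norm_smul[of smul c 0] by simp

lemma seq_single_add: "seq_single k (u + w) = seq_add (seq_single k u) (seq_single k (w::'e::monoid_add))"
  by (auto simp: seq_single_def seq_add_def)

lemma seq_single_smul:
  "complex_banach smul \<Longrightarrow> seq_single k (smul c u) = seq_smul smul c (seq_single k u)"
  by (auto simp: seq_single_def seq_smul_def complex_banach_smul_zero)

lemma seq_add_trunc_tail: "seq_add (seq_trunc K z) (seq_tail K z) = (z :: nat \<Rightarrow> 'e::monoid_add)"
  by (auto simp: seq_add_def seq_trunc_def seq_tail_def)

lemma seq_trunc_Suc:
  "seq_trunc (Suc K) z = seq_add (seq_trunc K z) (seq_single K (z K :: 'e::monoid_add))"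
  by (auto simp: seq_add_def seq_trunc_def seq_single_def)

subsection \<open>The sequence space \<open>L\<^sub>p(E)\<close>\<close>

lemma lp_seq_norm_nonneg: "0 \<le> lp_seq_norm p z"
  by (simp add: lp_seq_norm_def)

lemma lp_seq_dominated:
  fixes z \<zeta> :: "nat \<Rightarrow> 'e::real_normed_vector"
  assumes p: "0 < p" and \<zeta>: "\<zeta> \<in> lp_seq p" and le: "\<And>n. norm (z n) \<le> norm (\<zeta> n)"
  shows "z \<in> lp_seq p" and "lp_seq_norm p z \<le> lp_seq_norm p \<zeta>"
proof -
  have le_powr: "norm (z n) powr p \<le> norm (\<zeta> n) powr p" for n
    using le p by (simp add: powr_mono2)
  have s\<zeta>: "summable (\<lambda>n. norm (\<zeta> n) powr p)"
    using \<zeta> by (simp add: lp_seq_def)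
  have sz: "summable (\<lambda>n. norm (z n) powr p)"
    by (rule summable_comparison_test'[OF s\<zeta>]) (use le_powr in auto)
  then show "z \<in> lp_seq p"
    by (simp add: lp_seq_def)
  have "(\<Sum>n. norm (z n) powr p) \<le> (\<Sum>n. norm (\<zeta> n) powr p)"
    by (rule suminf_le[OF le_powr sz s\<zeta>])
  moreover have "0 \<le> (\<Sum>n. norm (z n) powr p)"
    by (rule suminf_nonneg[OF sz]) simp
  ultimately show "lp_seq_norm p z \<le> lp_seq_norm p \<zeta>"
    using p unfolding lp_seq_norm_def by (auto intro!: powr_mono2)
qed

lemma lp_seq_single:
  fixes v :: "'e::real_normed_vector"
  assumes p: "0 < p"
  shows "seq_single k v \<in> lp_seq p" and "lp_seq_norm p (seq_single k v) = norm v"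
proof -
  have "(\<lambda>j. norm (seq_single k v j) powr p) = (\<lambda>j. if j = k then norm v powr p else 0)"
    by (auto simp: seq_single_def)
  then have "(\<lambda>j. norm (seq_single k v j) powr p) sums (norm v powr p)"
    using sums_single[of k "\<lambda>_. norm v powr p"] by simp
  then show "seq_single k v \<in> lp_seq p" and "lp_seq_norm p (seq_single k v) = norm v"
    using p unfolding lp_seq_def lp_seq_norm_def by (auto simp: sums_iff powr_powr)
qed

lemma norm_le_lp_seq_norm:
  fixes \<zeta> :: "nat \<Rightarrow> 'e::real_normed_vector"
  assumes p: "0 < p" and \<zeta>: "\<zeta> \<in> lp_seq p"
  shows "norm (\<zeta> k) \<le> lp_seq_norm p \<zeta>"
  using lp_seq_dominated(2)[OF p \<zeta>, of "seq_single k (\<zeta> k)"] lp_seq_single[OF p, of k "\<zeta> k"]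
  by (simp add: seq_single_def)

lemma lp_seq_smul:
  fixes \<zeta> :: "nat \<Rightarrow> 'e::banach"
  assumes p: "0 < p" and cb: "complex_banach smul" and \<zeta>: "\<zeta> \<in> lp_seq p"
  shows "seq_smul smul c \<zeta> \<in> lp_seq p"
    and "lp_seq_norm p (seq_smul smul c \<zeta>) = cmod c * lp_seq_norm p \<zeta>"
proof -
  have s: "summable (\<lambda>n. norm (\<zeta> n) powr p)"
    using \<zeta> by (simp add: lp_seq_def)
  have terms: "(\<lambda>n. norm (seq_smul smul c \<zeta> n) powr p) = (\<lambda>n. cmod c powr p * norm (\<zeta> n) powr p)"
    by (auto simp: seq_smul_def complex_banach_norm_smul[OF cb] powr_mult)
  have "summable (\<lambda>n. norm (seq_smul smul c \<zeta> n) powr p)"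
    unfolding terms using s by (rule summable_mult)
  then show "seq_smul smul c \<zeta> \<in> lp_seq p"
    by (simp add: lp_seq_def)
  have "0 \<le> (\<Sum>n. norm (\<zeta> n) powr p)"
    by (rule suminf_nonneg[OF s]) simp
  then show "lp_seq_norm p (seq_smul smul c \<zeta>) = cmod c * lp_seq_norm p \<zeta>"
    unfolding lp_seq_norm_def terms suminf_mult[OF s] using p by (simp add: powr_mult powr_powr)
qed

lemma lp_seq_trunc: "0 < p \<Longrightarrow> z \<in> lp_seq p \<Longrightarrow> seq_trunc K z \<in> lp_seq p"
  by (rule lp_seq_dominated(1)) (auto simp: seq_trunc_def)

lemma lp_seq_tail: "0 < p \<Longrightarrow> z \<in> lp_seq p \<Longrightarrow> seq_tail K z \<in> lp_seq p"
  by (rule lp_seq_dominated(1)) (auto simp: seq_tail_def)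

lemma lp_seq_norm_tail_tendsto_zero:
  fixes \<zeta> :: "nat \<Rightarrow> 'e::real_normed_vector"
  assumes p: "0 < p" and \<zeta>: "\<zeta> \<in> lp_seq p"
  shows "(\<lambda>K. lp_seq_norm p (seq_tail K \<zeta>)) \<longlonglongrightarrow> 0"
proof -
  define a where "a = (\<lambda>n. norm (\<zeta> n) powr p)"
  have s: "summable a"
    using \<zeta> by (simp add: lp_seq_def a_def)
  have tail_sum: "(\<Sum>n. norm (seq_tail K \<zeta> n) powr p) = suminf a - (\<Sum>i<K. a i)" for K
  proof -
    have "(\<lambda>n. norm (seq_tail K \<zeta> n) powr p) = (\<lambda>n. if n \<in> {..<K} then 0 else a n)"
      using p by (auto simp: seq_tail_def a_def)
    moreover have "(\<lambda>n. if n \<in> {..<K} then 0 else a n) sums (suminf a - (\<Sum>i<K. a i))"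
      by (intro sums_If_finite_set'[OF summable_sums[OF s]]) (auto simp: sum_negf)
    ultimately show ?thesis
      by (simp add: sums_iff)
  qed
  have "(\<lambda>K. suminf a - (\<Sum>i<K. a i)) \<longlonglongrightarrow> suminf a - suminf a"
    by (intro tendsto_diff tendsto_const summable_LIMSEQ[OF s])
  then have "(\<lambda>K. suminf a - (\<Sum>i<K. a i)) \<longlonglongrightarrow> 0"
    by simp
  moreover have "0 \<le> suminf a - (\<Sum>i<K. a i)" for K
    using sum_le_suminf[OF s, of "{..<K}"] by (auto simp: a_def)
  ultimately have "(\<lambda>K. (suminf a - (\<Sum>i<K. a i)) powr (1/p)) \<longlonglongrightarrow> 0"
    using p by (intro tendsto_zero_powrI[OF _ tendsto_const]) auto
  then show ?thesis
    unfolding lp_seq_norm_def tail_sum .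
qed

lemma cdual_add: "\<eta> \<in> cdual V N add sm \<Longrightarrow> u \<in> V \<Longrightarrow> w \<in> V \<Longrightarrow> \<eta> (add u w) = \<eta> u + \<eta> w"
  by (simp add: cdual_def)

lemma cdual_smul: "\<eta> \<in> cdual V N add sm \<Longrightarrow> u \<in> V \<Longrightarrow> \<eta> (sm c u) = c * \<eta> u"
  by (simp add: cdual_def)

lemma bdd_above_dual_ball:
  assumes "\<eta> \<in> cdual V N add sm" and "\<And>z. z \<in> V \<Longrightarrow> 0 \<le> N z"
  shows "bdd_above {cmod (\<eta> u) | u. u \<in> V \<and> N u \<le> 1}"
proof -
  obtain C where C: "\<forall>u\<in>V. cmod (\<eta> u) \<le> C * N u"
    using assms(1) by (auto simp: cdual_def)
  have "cmod (\<eta> u) \<le> \<bar>C\<bar>" if "u \<in> V" "N u \<le> 1" for u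
  proof -
    have "cmod (\<eta> u) \<le> \<bar>C\<bar> * N u"
      using C assms(2)[OF that(1)] that(1) by (meson abs_ge_self mult_right_mono order_trans)
    also have "\<dots> \<le> \<bar>C\<bar>"
      using that assms(2)[OF that(1)] by (simp add: mult_left_le)
    finally show ?thesis .
  qed
  then show ?thesis
    by (auto intro!: bdd_aboveI)
qed

lemma dual_norm_nonneg:
  assumes "\<eta> \<in> cdual V N add sm" and "\<And>z. z \<in> V \<Longrightarrow> 0 \<le> N z" and "u \<in> V" and "N u \<le> 1"
  shows "0 \<le> dual_norm V N \<eta>"
proof -
  have "cmod (\<eta> u) \<le> dual_norm V N \<eta>"
    unfolding dual_norm_def by (rule cSup_upper[OF _ bdd_above_dual_ball[OF assms(1,2)]]) (use assms in auto)
  then show ?thesis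
    by (meson norm_ge_zero order_trans)
qed

text \<open>In this abstract setting \<open>sm 0 z\<close> stands in for the zero vector.\<close>

lemma dual_norm_bound:
  assumes \<eta>: "\<eta> \<in> cdual V N add sm" and z: "z \<in> V" and N_nonneg: "\<And>z. z \<in> V \<Longrightarrow> 0 \<le> N z"
    and smul_closed: "\<And>c z. z \<in> V \<Longrightarrow> sm c z \<in> V"
    and N_smul: "\<And>c z. z \<in> V \<Longrightarrow> N (sm c z) = cmod c * N z"
    and null: "N z = 0 \<Longrightarrow> sm 0 z = z"
  shows "cmod (\<eta> z) \<le> dual_norm V N \<eta> * N z"
proof (cases "N z = 0")
  case True
  have "\<eta> z = \<eta> (sm 0 z)"
    using null[OF True] by simp
  also have "\<dots> = 0"
    using cdual_smul[OF \<eta> z] by simp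
  finally show ?thesis
    using True by simp
next
  case False
  then have pos: "0 < N z"
    using N_nonneg[OF z] by simp
  define z' where "z' = sm (complex_of_real (1 / N z)) z"
  have "z' \<in> V" and "N z' = 1"
    using smul_closed[OF z] N_smul[OF z] pos by (simp_all add: z'_def norm_divide)
  then have "cmod (\<eta> z') \<le> dual_norm V N \<eta>"
    unfolding dual_norm_def by (intro cSup_upper[OF _ bdd_above_dual_ball[OF \<eta> N_nonneg]]) auto
  moreover have "\<eta> z' = complex_of_real (1 / N z) * \<eta> z"
    unfolding z'_def by (rule cdual_smul[OF \<eta> z])
  ultimately have "cmod (\<eta> z) / N z \<le> dual_norm V N \<eta>"
    using pos by (simp add: norm_mult norm_divide)
  then show ?thesis
    using pos by (simp add: divide_le_eq mult.commute)
qed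

lemma dual_norm_UNIV_eq: "dual_norm UNIV norm \<eta> = Sup ((\<lambda>u. cmod (\<eta> u)) ` {u. norm u \<le> 1})"
  unfolding dual_norm_def by (rule arg_cong[where f = Sup]) auto

lemma dual_norm_bound_banach:
  fixes smul :: "complex \<Rightarrow> 'e::banach \<Rightarrow> 'e"
  assumes cb: "complex_banach smul" and \<eta>: "\<eta> \<in> cdual UNIV norm (+) smul"
  shows "cmod (\<eta> v) \<le> dual_norm UNIV norm \<eta> * norm v"
  by (rule dual_norm_bound[OF \<eta>]) (auto simp: complex_banach_norm_smul[OF cb] complex_banach_smul_zero[OF cb])

lemma dual_norm_nonneg_banach:
  fixes smul :: "complex \<Rightarrow> 'e::banach \<Rightarrow> 'e"
  shows "\<eta> \<in> cdual UNIV norm (+) smul \<Longrightarrow> 0 \<le> dual_norm UNIV norm \<eta>"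
  by (rule dual_norm_nonneg[where u = 0]) auto

lemma dual_norm_bound_lp_seq:
  fixes smul :: "complex \<Rightarrow> 'e::banach \<Rightarrow> 'e"
  assumes p: "0 < p" and cb: "complex_banach smul"
    and H: "H \<in> cdual (lp_seq p) (lp_seq_norm p) seq_add (seq_smul smul)" and z: "z \<in> lp_seq p"
  shows "cmod (H z) \<le> dual_norm (lp_seq p) (lp_seq_norm p) H * lp_seq_norm p z"
proof (rule dual_norm_bound[OF H z lp_seq_norm_nonneg])
  show "seq_smul smul c y \<in> lp_seq p" and "lp_seq_norm p (seq_smul smul c y) = cmod c * lp_seq_norm p y"
    if "y \<in> lp_seq p" for c y
    using lp_seq_smul[OF p cb that] by simp_all
  show "seq_smul smul 0 z = z" if "lp_seq_norm p z = 0"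
    using norm_le_lp_seq_norm[OF p z] that
    by (auto simp: seq_smul_def complex_banach_smul_zero[OF cb] fun_eq_iff)
qed

lemma dual_norm_nonneg_lp_seq:
  fixes smul :: "complex \<Rightarrow> 'e::banach \<Rightarrow> 'e"
  assumes p: "0 < p" and H: "H \<in> cdual (lp_seq p) (lp_seq_norm p) seq_add (seq_smul smul)"
  shows "0 \<le> dual_norm (lp_seq p) (lp_seq_norm p) H"
  by (rule dual_norm_nonneg[OF H lp_seq_norm_nonneg, of "seq_single 0 (0::'e)"])
    (use lp_seq_single[OF p, of 0 "0::'e"] in auto)

subsection \<open>Coordinate functionals on \<open>L\<^sub>p(E)\<close>\<close>

lemma cdual_lp_seq_coordinate:
  fixes smul :: "complex \<Rightarrow> 'e::banach \<Rightarrow> 'e"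
  assumes p: "0 < p" and cb: "complex_banach smul" and \<eta>: "\<eta> \<in> cdual UNIV norm (+) smul"
  shows "(\<lambda>\<zeta>. \<eta> (\<zeta> k)) \<in> cdual (lp_seq p) (lp_seq_norm p) seq_add (seq_smul smul)"
    and "dual_norm (lp_seq p) (lp_seq_norm p) (\<lambda>\<zeta>. \<eta> (\<zeta> k)) = dual_norm UNIV norm \<eta>"
proof -
  have "cmod (\<eta> (\<zeta> k)) \<le> dual_norm UNIV norm \<eta> * lp_seq_norm p \<zeta>" if "\<zeta> \<in> lp_seq p" for \<zeta>
  proof -
    have "cmod (\<eta> (\<zeta> k)) \<le> dual_norm UNIV norm \<eta> * norm (\<zeta> k)"
      by (rule dual_norm_bound_banach[OF cb \<eta>])
    also have "\<dots> \<le> dual_norm UNIV norm \<eta> * lp_seq_norm p \<zeta>"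
      using norm_le_lp_seq_norm[OF p that] dual_norm_nonneg_banach[OF \<eta>] by (rule mult_left_mono)
    finally show ?thesis .
  qed
  then show "(\<lambda>\<zeta>. \<eta> (\<zeta> k)) \<in> cdual (lp_seq p) (lp_seq_norm p) seq_add (seq_smul smul)"
    using \<eta> unfolding cdual_def seq_add_def seq_smul_def by auto
  have "{cmod (\<eta> (\<zeta> k)) |\<zeta>. \<zeta> \<in> lp_seq p \<and> lp_seq_norm p \<zeta> \<le> 1}
      = {cmod (\<eta> u) |u. u \<in> UNIV \<and> norm u \<le> 1}"
  proof (intro equalityI subsetI)
    fix y assume "y \<in> {cmod (\<eta> (\<zeta> k)) |\<zeta>. \<zeta> \<in> lp_seq p \<and> lp_seq_norm p \<zeta> \<le> 1}"
    then obtain \<zeta> where "y = cmod (\<eta> (\<zeta> k))" "\<zeta> \<in> lp_seq p" "lp_seq_norm p \<zeta> \<le> 1"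
      by auto
    moreover from this have "norm (\<zeta> k) \<le> 1"
      using norm_le_lp_seq_norm[OF p, of \<zeta> k] by simp
    ultimately show "y \<in> {cmod (\<eta> u) |u. u \<in> UNIV \<and> norm u \<le> 1}"
      by blast
  next
    fix y assume "y \<in> {cmod (\<eta> u) |u. u \<in> UNIV \<and> norm u \<le> 1}"
    then obtain v where "y = cmod (\<eta> (seq_single k v k))" "norm v \<le> 1"
      by (auto simp: seq_single_def)
    moreover have "seq_single k v \<in> lp_seq p" "lp_seq_norm p (seq_single k v) = norm v"
      using lp_seq_single[OF p] by blast+
    ultimately show "y \<in> {cmod (\<eta> (\<zeta> k)) |\<zeta>. \<zeta> \<in> lp_seq p \<and> lp_seq_norm p \<zeta> \<le> 1}"
      by (metis (mono_tags, lifting) mem_Collect_eq)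
  qed
  then show "dual_norm (lp_seq p) (lp_seq_norm p) (\<lambda>\<zeta>. \<eta> (\<zeta> k)) = dual_norm UNIV norm \<eta>"
    by (simp add: dual_norm_def)
qed

lemma cdual_comp_seq_single:
  fixes smul :: "complex \<Rightarrow> 'e::banach \<Rightarrow> 'e"
  assumes p: "0 < p" and cb: "complex_banach smul"
    and H: "H \<in> cdual (lp_seq p) (lp_seq_norm p) seq_add (seq_smul smul)"
  shows "cmod (H (seq_single k v)) \<le> dual_norm (lp_seq p) (lp_seq_norm p) H * norm v"
    and "(\<lambda>v. H (seq_single k v)) \<in> cdual UNIV norm (+) smul"
proof -
  have single: "seq_single k u \<in> lp_seq p" for u :: 'e
    using lp_seq_single[OF p] by blast
  show bound: "cmod (H (seq_single k v)) \<le> dual_norm (lp_seq p) (lp_seq_norm p) H * norm v" for v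
    using dual_norm_bound_lp_seq[OF p cb H single[of v]] lp_seq_single[OF p, of k v] by simp
  have "H (seq_single k (u + w)) = H (seq_single k u) + H (seq_single k w)" for u w
    unfolding seq_single_add by (rule cdual_add[OF H single single])
  moreover have "H (seq_single k (smul c u)) = c * H (seq_single k u)" for c u
    unfolding seq_single_smul[OF cb] by (rule cdual_smul[OF H single])
  ultimately show "(\<lambda>v. H (seq_single k v)) \<in> cdual UNIV norm (+) smul"
    unfolding cdual_def using bound by blast
qed

lemma cdual_lp_seq_trunc:
  fixes smul :: "complex \<Rightarrow> 'e::banach \<Rightarrow> 'e"
  assumes p: "0 < p" and cb: "complex_banach smul"
    and H: "H \<in> cdual (lp_seq p) (lp_seq_norm p) seq_add (seq_smul smul)" and z: "z \<in> lp_seq p"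
  shows "H (seq_trunc K z) = (\<Sum>k<K. H (seq_single k (z k)))"
proof (induction K)
  case 0
  have "seq_trunc 0 z = seq_smul smul 0 (seq_trunc 0 z)"
    by (auto simp: seq_trunc_def seq_smul_def complex_banach_smul_zero[OF cb])
  then have "H (seq_trunc 0 z) = 0 * H (seq_trunc 0 z)"
    using cdual_smul[OF H lp_seq_trunc[OF p z]] by metis
  then show ?case
    by simp
next
  case (Suc K)
  have "H (seq_trunc (Suc K) z) = H (seq_trunc K z) + H (seq_single K (z K))"
    unfolding seq_trunc_Suc using cdual_add[OF H lp_seq_trunc[OF p z] lp_seq_single(1)[OF p]] .
  then show ?case
    using Suc by simp
qed

lemma cdual_lp_seq_sums:
  fixes smul :: "complex \<Rightarrow> 'e::banach \<Rightarrow> 'e"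
  assumes p: "0 < p" and cb: "complex_banach smul"
    and H: "H \<in> cdual (lp_seq p) (lp_seq_norm p) seq_add (seq_smul smul)" and z: "z \<in> lp_seq p"
  shows "(\<lambda>k. H (seq_single k (z k))) sums H z"
proof -
  let ?D = "dual_norm (lp_seq p) (lp_seq_norm p) H"
  have split: "H z = (\<Sum>k<K. H (seq_single k (z k))) + H (seq_tail K z)" for K
  proof -
    have "H z = H (seq_trunc K z) + H (seq_tail K z)"
      using cdual_add[OF H lp_seq_trunc[OF p z, of K] lp_seq_tail[OF p z, of K]]
      by (simp only: seq_add_trunc_tail)
    then show ?thesis
      by (simp add: cdual_lp_seq_trunc[OF p cb H z])
  qed
  have "(\<lambda>K. ?D * lp_seq_norm p (seq_tail K z)) \<longlonglongrightarrow> ?D * 0"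
    by (intro tendsto_mult tendsto_const lp_seq_norm_tail_tendsto_zero[OF p z])
  moreover have "\<forall>K. norm (H (seq_tail K z)) \<le> ?D * lp_seq_norm p (seq_tail K z)"
    by (intro allI dual_norm_bound_lp_seq[OF p cb H] lp_seq_tail[OF p z])
  ultimately have "(\<lambda>K. H (seq_tail K z)) \<longlonglongrightarrow> 0"
    using Lim_null_comparison[OF always_eventually] by simp
  then have "(\<lambda>K. H z - H (seq_tail K z)) \<longlonglongrightarrow> H z - 0"
    by (intro tendsto_diff tendsto_const)
  moreover have "H z - H (seq_tail K z) = (\<Sum>k<K. H (seq_single k (z k)))" for K
    using split[of K] by simp
  ultimately show ?thesis
    unfolding sums_def by simp
qed

lemma sum_mult_Sup_le:
  fixes a :: "nat \<Rightarrow> real" and \<phi> :: "nat \<Rightarrow> 'w \<Rightarrow> real"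
  assumes W: "W \<noteq> {}" and bdd: "\<And>k. bdd_above (\<phi> k ` W)" and a: "\<And>k. 0 \<le> a k"
    and bound: "\<And>w. (\<forall>k<K. w k \<in> W) \<Longrightarrow> (\<Sum>k<K. a k * \<phi> k (w k)) \<le> B"
  shows "(\<Sum>k<K. a k * Sup (\<phi> k ` W)) \<le> B"
  using bound
proof (induction K arbitrary: B)
  case 0
  then show ?case by simp
next
  case (Suc K)
  have last: "(\<Sum>k<K. a k * \<phi> k (w k)) + a K * \<phi> K t \<le> B"
    if "\<forall>k<K. w k \<in> W" "t \<in> W" for w t
  proof -
    have "(\<Sum>k<K. a k * \<phi> k ((w(K := t)) k)) = (\<Sum>k<K. a k * \<phi> k (w k))"
      by (intro sum.cong) auto
    then show ?thesis
      using Suc.prems[of "w(K := t)"] that by (simp add: less_Suc_eq)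
  qed
  have "a K * Sup (\<phi> K ` W) \<le> B - (\<Sum>k<K. a k * \<phi> k (w k))" if w: "\<forall>k<K. w k \<in> W" for w
  proof (cases "a K = 0")
    case True
    then show ?thesis
      using last[OF w] W by fastforce
  next
    case False
    then have pos: "0 < a K"
      using a[of K] by simp
    have "\<phi> K t \<le> (B - (\<Sum>k<K. a k * \<phi> k (w k))) / a K" if "t \<in> W" for t
      using last[OF w that] pos by (simp add: pos_le_divide_eq mult.commute)
    then have "Sup (\<phi> K ` W) \<le> (B - (\<Sum>k<K. a k * \<phi> k (w k))) / a K"
      using W by (intro cSup_least) auto
    then show ?thesis
      using pos by (simp add: pos_le_divide_eq mult.commute)
  qed
  then have "(\<Sum>k<K. a k * Sup (\<phi> k ` W)) \<le> B - a K * Sup (\<phi> K ` W)"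
    by (intro Suc.IH) (simp add: algebra_simps)
  then show ?case
    by simp
qed

lemma cnj_sgn_mult_self: "cnj (sgn h) * h = complex_of_real (cmod h)"
proof (cases "h = 0")
  case False
  have "cnj (sgn h) * h = h * cnj h / complex_of_real (cmod h)"
    by (simp add: sgn_eq mult.commute)
  also have "\<dots> = complex_of_real (cmod h) ^ 2 / complex_of_real (cmod h)"
    by (simp add: complex_norm_square[symmetric])
  finally show ?thesis
    using False by (simp add: power2_eq_square)
qed simp

text \<open>Test \<open>H\<close> on the sequence with entries \<open>cnj (sgn (H (e\<^sub>k w\<^sub>k))) \<parallel>z\<^sub>k\<parallel> w\<^sub>k\<close>: this
  phase correction makes every term of \<open>H y = \<Sum>\<^sub>k H (e\<^sub>k y\<^sub>k)\<close> nonnegative.\<close>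

lemma sum_coordinate_values_le:
  fixes smul :: "complex \<Rightarrow> 'e::banach \<Rightarrow> 'e" and z w :: "nat \<Rightarrow> 'e"
  assumes p: "0 < p" and cb: "complex_banach smul"
    and H: "H \<in> cdual (lp_seq p) (lp_seq_norm p) seq_add (seq_smul smul)" and z: "z \<in> lp_seq p"
    and w: "\<forall>k<K. norm (w k) \<le> 1"
  shows "(\<Sum>k<K. norm (z k) * cmod (H (seq_single k (w k))))
          \<le> dual_norm (lp_seq p) (lp_seq_norm p) H * lp_seq_norm p z"
proof -
  let ?D = "dual_norm (lp_seq p) (lp_seq_norm p) H"
  define c where "c j = cnj (sgn (H (seq_single j (w j)))) * complex_of_real (norm (z j))" for j
  define y where "y j = (if j < K then smul (c j) (w j) else 0)" for j
  have "norm (y j) \<le> norm (z j)" for j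
  proof (cases "j < K")
    case True
    have "norm (y j) = cmod (sgn (H (seq_single j (w j)))) * norm (z j) * norm (w j)"
      using True by (simp add: y_def c_def complex_banach_norm_smul[OF cb] norm_mult)
    also have "\<dots> \<le> 1 * norm (z j) * 1"
      using w True by (intro mult_mono) (auto simp: norm_sgn)
    finally show ?thesis
      by simp
  qed (simp add: y_def)
  then have y: "y \<in> lp_seq p" and y_norm: "lp_seq_norm p y \<le> lp_seq_norm p z"
    using lp_seq_dominated[OF p z] by auto
  have "H (seq_single k (y k)) = complex_of_real (norm (z k) * cmod (H (seq_single k (w k))))"
    if "k < K" for k
  proof -
    have "H (seq_single k (y k)) = c k * H (seq_single k (w k))"
      using that cdual_smul[OF H lp_seq_single(1)[OF p]]
      by (simp add: y_def seq_single_smul[OF cb])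
    then show ?thesis
      by (simp add: c_def cnj_sgn_mult_self)
  qed
  moreover have "seq_trunc K y = y"
    by (auto simp: seq_trunc_def y_def)
  ultimately have Hy: "H y = complex_of_real (\<Sum>k<K. norm (z k) * cmod (H (seq_single k (w k))))"
    using cdual_lp_seq_trunc[OF p cb H y, of K] by simp
  have "(\<Sum>k<K. norm (z k) * cmod (H (seq_single k (w k)))) = cmod (H y)"
    unfolding Hy norm_of_real by (simp add: sum_nonneg)
  also have "\<dots> \<le> ?D * lp_seq_norm p y"
    by (rule dual_norm_bound_lp_seq[OF p cb H y])
  also have "\<dots> \<le> ?D * lp_seq_norm p z"
    using y_norm dual_norm_nonneg_lp_seq[OF p H] by (rule mult_left_mono)
  finally show ?thesis .
qed

lemma sum_coordinate_dual_norms_le: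
  fixes smul :: "complex \<Rightarrow> 'e::banach \<Rightarrow> 'e" and z :: "nat \<Rightarrow> 'e"
  assumes p: "0 < p" and cb: "complex_banach smul"
    and H: "H \<in> cdual (lp_seq p) (lp_seq_norm p) seq_add (seq_smul smul)" and z: "z \<in> lp_seq p"
  shows "(\<Sum>k<K. norm (z k) * dual_norm UNIV norm (\<lambda>v. H (seq_single k v)))
          \<le> dual_norm (lp_seq p) (lp_seq_norm p) H * lp_seq_norm p z"
proof -
  let ?D = "dual_norm (lp_seq p) (lp_seq_norm p) H"
  have "(\<Sum>k<K. norm (z k) * Sup ((\<lambda>u. cmod (H (seq_single k u))) ` {u. norm u \<le> 1}))
      \<le> ?D * lp_seq_norm p z"
  proof (rule sum_mult_Sup_le)
    show "bdd_above ((\<lambda>u. cmod (H (seq_single k u))) ` {u. norm u \<le> 1})" for k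
    proof (rule bdd_aboveI2)
      fix u :: 'e assume "u \<in> {u. norm u \<le> 1}"
      then have "?D * norm u \<le> ?D"
        using dual_norm_nonneg_lp_seq[OF p H] by (simp add: mult_left_le)
      then show "cmod (H (seq_single k u)) \<le> ?D"
        using cdual_comp_seq_single(1)[OF p cb H, of k u] by linarith
    qed
  qed (use sum_coordinate_values_le[OF p cb H z] in \<open>auto intro: exI[of _ 0]\<close>)
  then show ?thesis
    by (simp add: dual_norm_UNIV_eq)
qed

subsection \<open>Double series enumerated by \<open>prod_decode\<close>\<close>

lemma summable_prod_decode_nonneg:
  fixes g :: "nat \<times> nat \<Rightarrow> real" and b :: "nat \<Rightarrow> real"
  assumes g_nonneg: "\<And>q. 0 \<le> g q" and rows: "\<And>n K. (\<Sum>k<K. g (n, k)) \<le> b n" and b: "summable b"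
  shows "summable (\<lambda>m. g (prod_decode m))" and "(\<Sum>m. g (prod_decode m)) \<le> (\<Sum>n. b n)"
proof -
  have partial: "(\<Sum>m<M. g (prod_decode m)) \<le> (\<Sum>n. b n)" for M
  proof -
    have decoded: "prod_decode ` {..<M} \<subseteq> {..<M} \<times> {..<M}"
    proof
      fix q assume "q \<in> prod_decode ` {..<M}"
      then obtain m where m: "m < M" "q = prod_decode m"
        by auto
      obtain i j where q: "q = (i, j)"
        by (cases q)
      have "prod_encode (i, j) = m"
        using m q by (metis prod_decode_inverse)
      then show "q \<in> {..<M} \<times> {..<M}"
        using m(1) q le_prod_encode_1[of i j] le_prod_encode_2[of j i] by auto
    qed
    have "(\<Sum>m<M. g (prod_decode m)) = (\<Sum>q\<in>prod_decode ` {..<M}. g q)"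
      by (simp add: sum.reindex[OF inj_prod_decode])
    also have "\<dots> \<le> (\<Sum>q\<in>{..<M} \<times> {..<M}. g q)"
      by (rule sum_mono2) (auto simp: decoded g_nonneg)
    also have "\<dots> = (\<Sum>n<M. \<Sum>k<M. g (n, k))"
      by (simp add: sum.cartesian_product)
    also have "\<dots> \<le> (\<Sum>n<M. b n)"
      by (intro sum_mono rows)
    also have "\<dots> \<le> (\<Sum>n. b n)"
      using rows[of _ 0] by (intro sum_le_suminf[OF b]) auto
    finally show ?thesis .
  qed
  show "summable (\<lambda>m. g (prod_decode m))"
    by (rule summableI_nonneg_bounded[OF g_nonneg partial])
  then show "(\<Sum>m. g (prod_decode m)) \<le> (\<Sum>n. b n)"
    by (rule suminf_le_const[OF _ partial])
qed

lemma sums_prod_decode: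
  fixes f :: "nat \<times> nat \<Rightarrow> 'a::banach"
  assumes abs: "summable (\<lambda>m. norm (f (prod_decode m)))"
    and row_sums: "\<And>n. (\<lambda>k. f (n, k)) sums s n"
  shows "(\<lambda>m. f (prod_decode m)) sums (\<Sum>n. s n)"
proof -
  have conv: "(\<lambda>m. f (prod_decode m)) sums (\<Sum>m. f (prod_decode m))"
    using summable_norm_cancel[OF abs] by (rule summable_sums)
  then have "((\<lambda>m. f (prod_decode m)) has_sum (\<Sum>m. f (prod_decode m))) UNIV"
    by (rule norm_summable_imp_has_sum[OF abs])
  then have all: "(f has_sum (\<Sum>m. f (prod_decode m))) (UNIV \<times> UNIV)"
    unfolding UNIV_Times_UNIV by (rule has_sum_reindex_bij_betw[OF bij_prod_decode, THEN iffD1])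
  have row: "((\<lambda>k. f (n, k)) has_sum s n) UNIV" for n
  proof -
    have "f summable_on Pair n ` UNIV"
      using summable_on_subset_banach[OF has_sum_imp_summable[OF all]] by simp
    then have "(\<lambda>k. f (n, k)) summable_on UNIV"
      using summable_on_reindex[of "Pair n" UNIV f] by (simp add: comp_def inj_on_def)
    then have "((\<lambda>k. f (n, k)) has_sum (\<Sum>\<^sub>\<infinity>k. f (n, k))) UNIV"
      by simp
    moreover from this have "(\<Sum>\<^sub>\<infinity>k. f (n, k)) = s n"
      using sums_unique2[OF has_sum_imp_sums row_sums] by blast
    ultimately show ?thesis
      by simp
  qed
  have "s sums (\<Sum>m. f (prod_decode m))"
    using has_sum_SigmaD[OF all row] by (rule has_sum_imp_sums)
  then show ?thesis
    using conv by (simp add: sums_iff)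
qed

subsection \<open>Transferring coefficient representations\<close>

lemma coef_cost_nonneg:
  assumes r: "coef_repr G \<rho> V N add sm u \<xi> \<eta>"
    and N_nonneg: "\<And>z. z \<in> V \<Longrightarrow> 0 \<le> N z" and "v \<in> V" and "N v \<le> 1"
  shows "0 \<le> coef_cost V N \<xi> \<eta>"
proof -
  have "0 \<le> N (\<xi> n) * dual_norm V N (\<eta> n)" for n
    using r assms(2-4) dual_norm_nonneg[of "\<eta> n" V N add sm v] by (simp add: coef_repr_def)
  then show ?thesis
    using r unfolding coef_cost_def coef_repr_def by (intro suminf_nonneg) auto
qed

lemma coef_norm_le_transfer:
  assumes u: "u \<in> coef_space G \<rho>' V' N' add' sm'"
    and N_nonneg: "\<And>z. z \<in> V \<Longrightarrow> 0 \<le> N z" and "v \<in> V" and "N v \<le> 1"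
    and transfer: "\<And>\<xi>' \<eta>'. coef_repr G \<rho>' V' N' add' sm' u \<xi>' \<eta>' \<Longrightarrow>
      \<exists>\<xi> \<eta>. coef_repr G \<rho> V N add sm u \<xi> \<eta> \<and> coef_cost V N \<xi> \<eta> \<le> coef_cost V' N' \<xi>' \<eta>'"
  shows "coef_norm G \<rho> V N add sm u \<le> coef_norm G \<rho>' V' N' add' sm' u"
  unfolding coef_norm_altdef
proof (rule cInf_mono)
  show "{coef_cost V' N' \<xi> \<eta> |\<xi> \<eta>. coef_repr G \<rho>' V' N' add' sm' u \<xi> \<eta>} \<noteq> {}"
    using u by (auto simp: coef_space_def)
  have "0 \<le> coef_cost V N \<xi> \<eta>" if "coef_repr G \<rho> V N add sm u \<xi> \<eta>" for \<xi> \<eta>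
    using that N_nonneg assms(3,4) by (rule coef_cost_nonneg)
  then show "bdd_below {coef_cost V N \<xi> \<eta> |\<xi> \<eta>. coef_repr G \<rho> V N add sm u \<xi> \<eta>}"
    by (auto intro: bdd_belowI[of _ 0])
  show "\<exists>a\<in>{coef_cost V N \<xi> \<eta> |\<xi> \<eta>. coef_repr G \<rho> V N add sm u \<xi> \<eta>}. a \<le> b"
    if "b \<in> {coef_cost V' N' \<xi> \<eta> |\<xi> \<eta>. coef_repr G \<rho>' V' N' add' sm' u \<xi> \<eta>}" for b
    using that transfer by blast
qed

lemma coef_spaces_eqI:
  assumes N_nonneg: "\<And>z. z \<in> V \<Longrightarrow> 0 \<le> N z" and "v \<in> V" and "N v \<le> 1"
    and N'_nonneg: "\<And>z. z \<in> V' \<Longrightarrow> 0 \<le> N' z" and "v' \<in> V'" and "N' v' \<le> 1"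
    and forward: "\<And>u \<xi> \<eta>. coef_repr G \<rho> V N add sm u \<xi> \<eta> \<Longrightarrow>
      \<exists>\<xi>' \<eta>'. coef_repr G \<rho>' V' N' add' sm' u \<xi>' \<eta>' \<and> coef_cost V' N' \<xi>' \<eta>' \<le> coef_cost V N \<xi> \<eta>"
    and backward: "\<And>u \<xi>' \<eta>'. coef_repr G \<rho>' V' N' add' sm' u \<xi>' \<eta>' \<Longrightarrow>
      \<exists>\<xi> \<eta>. coef_repr G \<rho> V N add sm u \<xi> \<eta> \<and> coef_cost V N \<xi> \<eta> \<le> coef_cost V' N' \<xi>' \<eta>'"
  shows "coef_space G \<rho> V N add sm = coef_space G \<rho>' V' N' add' sm'
    \<and> (\<forall>u \<in> coef_space G \<rho> V N add sm. coef_norm G \<rho> V N add sm u = coef_norm G \<rho>' V' N' add' sm' u)"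
proof
  show spaces: "coef_space G \<rho> V N add sm = coef_space G \<rho>' V' N' add' sm'"
    unfolding coef_space_def using forward backward by blast
  show "\<forall>u \<in> coef_space G \<rho> V N add sm. coef_norm G \<rho> V N add sm u = coef_norm G \<rho>' V' N' add' sm' u"
    using spaces
    by (intro ballI antisym coef_norm_le_transfer[OF _ N_nonneg assms(2,3) backward]
        coef_norm_le_transfer[OF _ N'_nonneg assms(5,6) forward]) simp_all
qed

lemma coef_repr_amplify_coordinate:
  fixes smul :: "complex \<Rightarrow> 'e::banach \<Rightarrow> 'e" and \<pi> :: "'g \<Rightarrow> 'e \<Rightarrow> 'e"
  assumes p: "0 < p" and cb: "complex_banach smul" and r: "coef_repr G \<pi> UNIV norm (+) smul u \<xi> \<eta>"
  shows "coef_repr G (amplify \<pi>) (lp_seq p) (lp_seq_norm p) seq_add (seq_smul smul) u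
           (\<lambda>n. seq_single k (\<xi> n)) (\<lambda>n \<zeta>. \<eta> n (\<zeta> k))"
    and "coef_cost (lp_seq p) (lp_seq_norm p) (\<lambda>n. seq_single k (\<xi> n)) (\<lambda>n \<zeta>. \<eta> n (\<zeta> k))
           = coef_cost UNIV norm \<xi> \<eta>"
proof -
  have \<eta>: "\<eta> n \<in> cdual UNIV norm (+) smul" for n
    using r by (simp add: coef_repr_def)
  have terms: "lp_seq_norm p (seq_single k (\<xi> n)) * dual_norm (lp_seq p) (lp_seq_norm p) (\<lambda>\<zeta>. \<eta> n (\<zeta> k))
      = norm (\<xi> n) * dual_norm UNIV norm (\<eta> n)" for n
    by (simp add: lp_seq_single(2)[OF p] cdual_lp_seq_coordinate(2)[OF p cb \<eta>])
  then show "coef_cost (lp_seq p) (lp_seq_norm p) (\<lambda>n. seq_single k (\<xi> n)) (\<lambda>n \<zeta>. \<eta> n (\<zeta> k))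
      = coef_cost UNIV norm \<xi> \<eta>"
    by (simp add: coef_cost_def)
  show "coef_repr G (amplify \<pi>) (lp_seq p) (lp_seq_norm p) seq_add (seq_smul smul) u
      (\<lambda>n. seq_single k (\<xi> n)) (\<lambda>n \<zeta>. \<eta> n (\<zeta> k))"
    unfolding coef_repr_def
  proof (intro conjI allI)
    show "seq_single k (\<xi> n) \<in> lp_seq p" for n
      by (rule lp_seq_single(1)[OF p])
    show "(\<lambda>\<zeta>. \<eta> n (\<zeta> k)) \<in> cdual (lp_seq p) (lp_seq_norm p) seq_add (seq_smul smul)" for n
      by (rule cdual_lp_seq_coordinate(1)[OF p cb \<eta>])
    show "summable (\<lambda>n. lp_seq_norm p (seq_single k (\<xi> n))
        * dual_norm (lp_seq p) (lp_seq_norm p) (\<lambda>\<zeta>. \<eta> n (\<zeta> k)))"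
      using r by (simp add: terms coef_repr_def)
    show "u = (\<lambda>x\<in>carrier G. \<Sum>n. \<eta> n (amplify \<pi> x (seq_single k (\<xi> n)) k))"
      using r by (simp add: coef_repr_def amplify_def seq_single_def)
  qed
qed

definition flat_vecs :: "(nat \<Rightarrow> nat \<Rightarrow> 'e) \<Rightarrow> nat \<Rightarrow> 'e" where
  "flat_vecs \<Xi> m = \<Xi> (fst (prod_decode m)) (snd (prod_decode m))"

definition flat_funs :: "(nat \<Rightarrow> (nat \<Rightarrow> 'e::zero) \<Rightarrow> complex) \<Rightarrow> nat \<Rightarrow> 'e \<Rightarrow> complex" where
  "flat_funs H m = (\<lambda>v. H (fst (prod_decode m)) (seq_single (snd (prod_decode m)) v))"

lemma cdual_flat_funs:
  fixes smul :: "complex \<Rightarrow> 'e::banach \<Rightarrow> 'e"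
  assumes "0 < p" and "complex_banach smul"
    and "\<And>n. H n \<in> cdual (lp_seq p) (lp_seq_norm p) seq_add (seq_smul smul)"
  shows "flat_funs H m \<in> cdual UNIV norm (+) smul"
  unfolding flat_funs_def using assms by (rule cdual_comp_seq_single(2))

lemma flat_coef_cost_le:
  fixes smul :: "complex \<Rightarrow> 'e::banach \<Rightarrow> 'e"
  assumes p: "0 < p" and cb: "complex_banach smul"
    and H: "\<And>n. H n \<in> cdual (lp_seq p) (lp_seq_norm p) seq_add (seq_smul smul)"
    and \<Xi>: "\<And>n. \<Xi> n \<in> lp_seq p"
    and b: "summable (\<lambda>n. lp_seq_norm p (\<Xi> n) * dual_norm (lp_seq p) (lp_seq_norm p) (H n))"
  shows "summable (\<lambda>m. norm (flat_vecs \<Xi> m) * dual_norm UNIV norm (flat_funs H m))"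
    and "coef_cost UNIV norm (flat_vecs \<Xi>) (flat_funs H) \<le> coef_cost (lp_seq p) (lp_seq_norm p) \<Xi> H"
proof -
  define g where "g q = norm (\<Xi> (fst q) (snd q)) * dual_norm UNIV norm (\<lambda>v. H (fst q) (seq_single (snd q) v))"
    for q
  have "0 \<le> g q" for q
    unfolding g_def using dual_norm_nonneg_banach[OF cdual_comp_seq_single(2)[OF p cb H]] by simp
  moreover have "(\<Sum>k<K. g (n, k)) \<le> lp_seq_norm p (\<Xi> n) * dual_norm (lp_seq p) (lp_seq_norm p) (H n)" for n K
    unfolding g_def using sum_coordinate_dual_norms_le[OF p cb H[of n] \<Xi>[of n], of K]
    by (simp add: mult.commute)
  moreover have "g (prod_decode m) = norm (flat_vecs \<Xi> m) * dual_norm UNIV norm (flat_funs H m)" for m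
    by (simp add: g_def flat_vecs_def flat_funs_def)
  ultimately show "summable (\<lambda>m. norm (flat_vecs \<Xi> m) * dual_norm UNIV norm (flat_funs H m))"
    and "coef_cost UNIV norm (flat_vecs \<Xi>) (flat_funs H) \<le> coef_cost (lp_seq p) (lp_seq_norm p) \<Xi> H"
    using summable_prod_decode_nonneg[of g, OF _ _ b] by (simp_all add: coef_cost_def)
qed

lemma flat_coef_sums:
  fixes smul :: "complex \<Rightarrow> 'e::banach \<Rightarrow> 'e" and T :: "'e \<Rightarrow> 'e"
  assumes p: "0 < p" and cb: "complex_banach smul"
    and H: "\<And>n. H n \<in> cdual (lp_seq p) (lp_seq_norm p) seq_add (seq_smul smul)"
    and \<Xi>: "\<And>n. \<Xi> n \<in> lp_seq p"
    and b: "summable (\<lambda>n. lp_seq_norm p (\<Xi> n) * dual_norm (lp_seq p) (lp_seq_norm p) (H n))"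
    and T: "\<And>v. norm (T v) \<le> norm v"
  shows "(\<lambda>m. flat_funs H m (T (flat_vecs \<Xi> m))) sums (\<Sum>n. H n (\<lambda>k. T (\<Xi> n k)))"
proof -
  let ?f = "\<lambda>q. H (fst q) (seq_single (snd q) (T (\<Xi> (fst q) (snd q))))"
  have bound: "norm (?f (prod_decode m)) \<le> norm (flat_vecs \<Xi> m) * dual_norm UNIV norm (flat_funs H m)"
    for m
  proof -
    have "norm (?f (prod_decode m)) \<le> dual_norm UNIV norm (flat_funs H m) * norm (T (flat_vecs \<Xi> m))"
      using dual_norm_bound_banach[OF cb cdual_flat_funs[OF p cb H]]
      by (simp add: flat_funs_def flat_vecs_def)
    also have "\<dots> \<le> dual_norm UNIV norm (flat_funs H m) * norm (flat_vecs \<Xi> m)"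
      by (intro mult_left_mono T dual_norm_nonneg_banach[OF cdual_flat_funs[OF p cb H]])
    finally show ?thesis
      by (simp add: mult.commute)
  qed
  have "summable (\<lambda>m. norm (?f (prod_decode m)))"
    by (rule summable_comparison_test'[OF flat_coef_cost_le(1)[OF p cb H \<Xi> b]]) (simp add: bound)
  moreover have "(\<lambda>k. ?f (n, k)) sums H n (\<lambda>k. T (\<Xi> n k))" for n
  proof -
    have "(\<lambda>k. T (\<Xi> n k)) \<in> lp_seq p"
      using T by (rule lp_seq_dominated(1)[OF p \<Xi>])
    from cdual_lp_seq_sums[OF p cb H this] show ?thesis
      by simp
  qed
  ultimately have "(\<lambda>m. ?f (prod_decode m)) sums (\<Sum>n. H n (\<lambda>k. T (\<Xi> n k)))"
    by (rule sums_prod_decode)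
  then show ?thesis
    by (simp add: flat_funs_def flat_vecs_def)
qed

lemma coef_repr_flat_amplify:
  fixes smul :: "complex \<Rightarrow> 'e::banach \<Rightarrow> 'e" and \<pi> :: "'g \<Rightarrow> 'e \<Rightarrow> 'e"
  assumes p: "0 < p" and cb: "complex_banach smul"
    and contr: "\<And>x v. x \<in> carrier G \<Longrightarrow> norm (\<pi> x v) \<le> norm v"
    and r: "coef_repr G (amplify \<pi>) (lp_seq p) (lp_seq_norm p) seq_add (seq_smul smul) u \<Xi> H"
  shows "coef_repr G \<pi> UNIV norm (+) smul u (flat_vecs \<Xi>) (flat_funs H)"
    and "coef_cost UNIV norm (flat_vecs \<Xi>) (flat_funs H) \<le> coef_cost (lp_seq p) (lp_seq_norm p) \<Xi> H"
proof -
  have \<Xi>: "\<Xi> n \<in> lp_seq p" and H: "H n \<in> cdual (lp_seq p) (lp_seq_norm p) seq_add (seq_smul smul)"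
    and b: "summable (\<lambda>n. lp_seq_norm p (\<Xi> n) * dual_norm (lp_seq p) (lp_seq_norm p) (H n))"
    and u: "u = (\<lambda>x\<in>carrier G. \<Sum>n. H n (amplify \<pi> x (\<Xi> n)))" for n
    using r by (auto simp: coef_repr_def)
  have "u = (\<lambda>x\<in>carrier G. \<Sum>m. flat_funs H m (\<pi> x (flat_vecs \<Xi> m)))"
    unfolding u
  proof (rule restrict_ext)
    fix x assume "x \<in> carrier G"
    from flat_coef_sums[OF p cb H \<Xi> b contr[OF this]]
    show "(\<Sum>n. H n (amplify \<pi> x (\<Xi> n))) = (\<Sum>m. flat_funs H m (\<pi> x (flat_vecs \<Xi> m)))"
      by (simp add: sums_iff amplify_def)
  qed
  then show "coef_repr G \<pi> UNIV norm (+) smul u (flat_vecs \<Xi>) (flat_funs H)"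
    using cdual_flat_funs[OF p cb H] flat_coef_cost_le(1)[OF p cb H \<Xi> b] by (simp add: coef_repr_def)
  show "coef_cost UNIV norm (flat_vecs \<Xi>) (flat_funs H) \<le> coef_cost (lp_seq p) (lp_seq_norm p) \<Xi> H"
    by (rule flat_coef_cost_le(2)[OF p cb H \<Xi> b])
qed

theorem proposition3:
  fixes G :: "('g, 'b) monoid_scheme" and T :: "'g topology"
    and p :: real
    and smul :: "complex \<Rightarrow> 'e::banach \<Rightarrow> 'e"
    and \<pi> :: "'g \<Rightarrow> 'e \<Rightarrow> 'e"
  assumes "lc_group G T"
    and "1 < p"
    and "QSLp_space TYPE('m) p smul"
    and "isometric_rep G T smul \<pi>"
  shows "coef_space G \<pi> UNIV norm (+) smul
           = coef_space G (amplify \<pi>) (lp_seq p) (lp_seq_norm p) seq_add (seq_smul smul)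
         \<and> (\<forall>u \<in> coef_space G \<pi> UNIV norm (+) smul.
           coef_norm G \<pi> UNIV norm (+) smul u
           = coef_norm G (amplify \<pi>) (lp_seq p) (lp_seq_norm p) seq_add (seq_smul smul) u)"
proof -
  have p: "0 < p"
    using assms(2) by simp
  have cb: "complex_banach smul"
    using assms(3) by (simp add: QSLp_space_def)
  have contr: "norm (\<pi> x v) \<le> norm v" if "x \<in> carrier G" for x v
    using assms(4) that by (simp add: isometric_rep_def)
  have to_amplify: "\<exists>\<xi>' \<eta>'. coef_repr G (amplify \<pi>) (lp_seq p) (lp_seq_norm p) seq_add (seq_smul smul) u \<xi>' \<eta>'
      \<and> coef_cost (lp_seq p) (lp_seq_norm p) \<xi>' \<eta>' \<le> coef_cost UNIV norm \<xi> \<eta>"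
    if "coef_repr G \<pi> UNIV norm (+) smul u \<xi> \<eta>" for u \<xi> \<eta>
    using coef_repr_amplify_coordinate[OF p cb that, where k = 0]
    by (intro exI[of _ "\<lambda>n. seq_single 0 (\<xi> n)"] exI[of _ "\<lambda>n \<zeta>. \<eta> n (\<zeta> 0)"]) simp
  have from_amplify: "\<exists>\<xi> \<eta>. coef_repr G \<pi> UNIV norm (+) smul u \<xi> \<eta>
      \<and> coef_cost UNIV norm \<xi> \<eta> \<le> coef_cost (lp_seq p) (lp_seq_norm p) \<Xi> H"
    if "coef_repr G (amplify \<pi>) (lp_seq p) (lp_seq_norm p) seq_add (seq_smul smul) u \<Xi> H" for u \<Xi> H
    using coef_repr_flat_amplify[OF p cb contr that] by blast
  show ?thesis
    by (rule coef_spaces_eqI[where v = "0::'e" and v' = "seq_single 0 (0::'e)", OF _ _ _ _ _ _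
          to_amplify from_amplify]) (simp_all add: lp_seq_norm_nonneg lp_seq_single[OF p])
qed

end
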